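(* Let $a>0$, $B_u>0$, $B_v\neq0$, $\Delta x\in(0,1]$, $\varepsilon>0$, let $(\alpha,\beta)$ be a SAT-parameter (defined in the context), and assume $2aB_v+\tfrac{\Delta x}{\varepsilon}B_u>0$. Consider the inequality $$\sqrt{2a|B_v\alpha|}<\sqrt{-\bigl(2aB_v+\tfrac{\Delta x}{\varepsilon}B_u\bigr)\alpha}.\qquad(\ast)$$ (a) If $B_v>0$, then $(\ast)$ holds (for all such $\Delta x,\varepsilon$). (b) If $B_v<0$, then for any $\delta_0>-4aB_u^{-1}B_v$, $(\ast)$ holds whenever $\Delta x\geq\delta_0\varepsilon$.
   Context: SAT-parameter: given $a>0$, $B_u>0$, $B_v\neq 0$, a pair $(\alpha,\beta)\in\mathbb{R}^2$ is a SAT-parameter if $\alpha<(3+2\sqrt2)\min(B_v^{-1},0)$ and $-a(1-B_v\alpha)-2a\sqrt{|B_v\alpha|}<\beta B_u<-a(1-B_v\alpha)+2a\sqrt{|B_v\alpha|}$. *)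

theory Defs
  imports Complex_Main
begin

definition sat_param :: "real \<Rightarrow> real \<Rightarrow> real \<Rightarrow> real \<Rightarrow> real \<Rightarrow> bool" where
  "sat_param a Bu Bv \<alpha> \<beta> \<longleftrightarrow>
     \<alpha> < (3 + 2 * sqrt 2) * min (inverse Bv) 0 \<and>
     - a * (1 - Bv * \<alpha>) - 2 * a * sqrt \<bar>Bv * \<alpha>\<bar> < \<beta> * Bu \<and>
     \<beta> * Bu < - a * (1 - Bv * \<alpha>) + 2 * a * sqrt \<bar>Bv * \<alpha>\<bar>"

end

theory Submission
  imports Defs
begin

text \<open>Of the SAT-parameter condition only \<open>\<alpha> < 0\<close> matters. Squaring and dividing by
  \<open>-\<alpha>\<close>, inequality (\<open>\<ast>\<close>) becomes \<open>2 a \<bar>B\<^sub>v\<bar> < 2 a B\<^sub>v + (\<Delta>x/\<epsilon>) B\<^sub>u\<close>. For \<open>B\<^sub>v > 0\<close> this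
  holds because \<open>(\<Delta>x/\<epsilon>) B\<^sub>u > 0\<close>; for \<open>B\<^sub>v < 0\<close> it reads \<open>(\<Delta>x/\<epsilon>) B\<^sub>u > -4 a B\<^sub>v\<close>, which
  \<open>\<Delta>x \<ge> \<delta>\<^sub>0 \<epsilon>\<close> with \<open>\<delta>\<^sub>0 > -4 a B\<^sub>v/B\<^sub>u\<close> guarantees.\<close>

lemma sat_param_alpha_neg:
  assumes "sat_param a Bu Bv \<alpha> \<beta>"
  shows "\<alpha> < 0"
proof -
  have "(3 + 2 * sqrt 2) * min (inverse Bv) 0 \<le> (0::real)"
    by (intro mult_nonneg_nonpos) auto
  then show ?thesis
    using assms unfolding sat_param_def by linarith
qed

lemma sqrt_abs_mult_less_sqrt_neg_mult:
  fixes a Bv K \<alpha> :: real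
  assumes "2 * a * \<bar>Bv\<bar> < K" and "\<alpha> < 0"
  shows "sqrt (2 * a * \<bar>Bv * \<alpha>\<bar>) < sqrt (- K * \<alpha>)"
proof -
  have "2 * a * \<bar>Bv\<bar> * (- \<alpha>) < K * (- \<alpha>)"
    using assms by (intro mult_strict_right_mono) auto
  then show ?thesis
    using assms(2) by (simp add: abs_mult algebra_simps)
qed

lemma dx_div_eps_mult_gt:
  fixes a Bu Bv dx \<epsilon> \<delta>0 :: real
  assumes "Bu > 0" and "\<epsilon> > 0"
    and "\<delta>0 > - 4 * a * inverse Bu * Bv" and "dx \<ge> \<delta>0 * \<epsilon>"
  shows "- 4 * a * Bv < dx / \<epsilon> * Bu"
proof -
  have "- 4 * a * Bv = - 4 * a * inverse Bu * Bv * Bu"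
    using assms(1) by simp
  also have "\<dots> < \<delta>0 * Bu"
    using assms(1,3) by (intro mult_strict_right_mono)
  also have "\<dots> \<le> dx / \<epsilon> * Bu"
    using assms by (intro mult_right_mono) (simp_all add: le_divide_eq)
  finally show ?thesis .
qed

theorem lemma3:
  fixes a Bu Bv dx \<epsilon> \<alpha> \<beta> :: real
  assumes "a > 0" and "Bu > 0" and "Bv \<noteq> 0"
    and "0 < dx" and "dx \<le> 1" and "\<epsilon> > 0"
    and "sat_param a Bu Bv \<alpha> \<beta>"
    and "2 * a * Bv + (dx / \<epsilon>) * Bu > 0"
  shows "(Bv > 0 \<longrightarrow>
            sqrt (2 * a * \<bar>Bv * \<alpha>\<bar>) < sqrt (- (2 * a * Bv + (dx / \<epsilon>) * Bu) * \<alpha>))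
       \<and> (Bv < 0 \<longrightarrow> (\<forall>\<delta>0::real. \<delta>0 > - 4 * a * inverse Bu * Bv \<longrightarrow> dx \<ge> \<delta>0 * \<epsilon> \<longrightarrow>
            sqrt (2 * a * \<bar>Bv * \<alpha>\<bar>) < sqrt (- (2 * a * Bv + (dx / \<epsilon>) * Bu) * \<alpha>)))"
proof -
  have \<alpha>_neg: "\<alpha> < 0"
    using assms(7) by (rule sat_param_alpha_neg)
  show ?thesis
  proof (intro conjI impI allI)
    assume "Bv > 0"
    moreover have "dx / \<epsilon> * Bu > 0"
      using assms by simp
    ultimately show "sqrt (2 * a * \<bar>Bv * \<alpha>\<bar>) < sqrt (- (2 * a * Bv + (dx / \<epsilon>) * Bu) * \<alpha>)"
      using \<alpha>_neg by (intro sqrt_abs_mult_less_sqrt_neg_mult) simp_all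
  next
    fix \<delta>0 :: real
    assume "Bv < 0" and "\<delta>0 > - 4 * a * inverse Bu * Bv" and "dx \<ge> \<delta>0 * \<epsilon>"
    then have "- 4 * a * Bv < dx / \<epsilon> * Bu"
      using assms(2,6) by (intro dx_div_eps_mult_gt)
    with \<open>Bv < 0\<close> have "2 * a * \<bar>Bv\<bar> < 2 * a * Bv + dx / \<epsilon> * Bu"
      by (simp add: abs_of_neg algebra_simps)
    then show "sqrt (2 * a * \<bar>Bv * \<alpha>\<bar>) < sqrt (- (2 * a * Bv + (dx / \<epsilon>) * Bu) * \<alpha>)"
      using \<alpha>_neg by (rule sqrt_abs_mult_less_sqrt_neg_mult)
  qed
qed

end
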